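(* For any time warp $f$, $n\in\omega\setminus\{0\}$, and $m\in\omega$: $f^{r}(n)=m\iff f(m)\le n<f(m+1)$; $f^{r}(n)=\omega\iff f(\omega)\le n$; $f^{r}(\omega)=m\iff f(m+1)=\omega$ and $f^{r}(k)=m$ for some $k\in\omega$; $f^{r}(\omega)=\omega\iff f(\omega)<\omega$ or ($f(\omega)=\omega$ and $f(k)<\omega$ for all $k\in\omega$).
   Context: Let $\overline{\omega}=\omega\cup\{\omega\}$ be the natural numbers with a top element $\omega$ adjoined, with its natural total order. A time warp is a monotone map $f\colon\overline{\omega}\to\overline{\omega}$ with $f(0)=0$ and $f(\omega)=\bigvee\{f(n)\mid n\in\omega\}$. The set $W$ of time warps is ordered pointwise and $fg:=f\circ g$; $\mathrm{id}$ is the identity. The left residual $\backslash$ is the binary operation on $W$ with $g\le f\backslash h\iff fg\le h$ for all $f,g,h\in W$. Define $f^{r}:=f\backslash\mathrm{id}$. *)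

theory Defs
  imports "HOL-Library.Extended_Nat"
begin

text \<open>omega-bar = natural numbers with top adjoined, modelled as enat (\<infinity> = omega).\<close>

definition time_warp :: "(enat \<Rightarrow> enat) \<Rightarrow> bool" where
  "time_warp f \<longleftrightarrow> mono f \<and> f 0 = 0 \<and> f \<infinity> = (SUP n. f (enat n))"

definition W :: "(enat \<Rightarrow> enat) set" where
  "W = {f. time_warp f}"

definition lres :: "(enat \<Rightarrow> enat) \<Rightarrow> (enat \<Rightarrow> enat) \<Rightarrow> (enat \<Rightarrow> enat)" where
  "lres f h = (THE g0. g0 \<in> W \<and> (\<forall>g\<in>W. g \<le> g0 \<longleftrightarrow> f \<circ> g \<le> h))"

definition rres :: "(enat \<Rightarrow> enat) \<Rightarrow> (enat \<Rightarrow> enat)" where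
  "rres f = lres f id"

end

theory Submission
  imports Defs
begin

text \<open>A time warp f preserves all suprema of \<open>\<omega>\<close>-bar, so for \<open>n \<noteq> 0\<close> the value
  \<open>r n = Sup {y. f y \<le> n}\<close> satisfies \<open>y \<le> r n \<longleftrightarrow> f y \<le> n\<close>. Setting \<open>r 0 = 0\<close> and
  \<open>r \<omega> = (SUP n. r n)\<close> gives a time warp, and this Galois connection shows that it is \<open>f\<^sup>r\<close>.
  All four clauses are then read off the Galois connection: \<open>r n = m\<close> means \<open>m \<le> r n\<close> but not
  \<open>m + 1 \<le> r n\<close>, and all \<open>r k\<close> are bounded by \<open>m\<close> exactly when \<open>f (m + 1) = \<omega>\<close>.\<close>

lemma time_warp_Sup:
  assumes "time_warp f"
  shows "f (Sup S) = (SUP y\<in>S. f y)"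
proof (rule antisym)
  from assms have mono: "mono f" and f0: "f 0 = 0" and f_inf: "f \<infinity> = (SUP k. f (enat k))"
    by (auto simp: time_warp_def)
  show "(SUP y\<in>S. f y) \<le> f (Sup S)"
    using mono by (rule mono_Sup)
  show "f (Sup S) \<le> (SUP y\<in>S. f y)"
  proof (cases "finite S")
    case True
    then show ?thesis
      using f0 by (cases "S = {}") (auto simp: Sup_enat_def intro: SUP_upper)
  next
    case False
    have "f (enat k) \<le> (SUP y\<in>S. f y)" for k
    proof -
      obtain y where "y \<in> S" "enat k \<le> y"
        using False finite_enat_bounded[of S k] by (meson linorder_le_cases)
      then show ?thesis
        by (meson SUP_upper mono monoD order_trans)
    qed
    moreover have "Sup S = \<infinity>"
      using False by (auto simp: Sup_enat_def)
    ultimately show ?thesis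
      by (simp add: f_inf SUP_least)
  qed
qed

text \<open>Time warps fix 0, which forces the residual to vanish at 0; the Galois connection below
  holds only for \<open>n \<noteq> 0\<close>.\<close>

definition rres_at :: "(enat \<Rightarrow> enat) \<Rightarrow> nat \<Rightarrow> enat" where
  "rres_at f n = (if n = 0 then 0 else Sup {y. f y \<le> enat n})"

lemma rres_at_ge_iff:
  assumes "time_warp f" and "n \<noteq> 0"
  shows "y \<le> rres_at f n \<longleftrightarrow> f y \<le> enat n"
proof
  assume "y \<le> rres_at f n"
  then have "f y \<le> f (Sup {y. f y \<le> enat n})"
    using assms by (simp add: rres_at_def time_warp_def monoD)
  also have "\<dots> = (SUP y\<in>{y. f y \<le> enat n}. f y)"
    by (rule time_warp_Sup[OF assms(1)])
  also have "\<dots> \<le> enat n"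
    unfolding SUP_le_iff by simp
  finally show "f y \<le> enat n" .
next
  assume "f y \<le> enat n"
  then show "y \<le> rres_at f n"
    using assms(2) by (simp add: rres_at_def Sup_upper)
qed

lemma mono_rres_at:
  assumes "time_warp f"
  shows "mono (rres_at f)"
proof (rule monoI)
  fix m n :: nat
  assume "m \<le> n"
  show "rres_at f m \<le> rres_at f n"
  proof (cases "m = 0")
    case True
    then show ?thesis
      by (simp add: rres_at_def)
  next
    case False
    with \<open>m \<le> n\<close> have "n \<noteq> 0"
      by simp
    have "f (rres_at f m) \<le> enat m"
      using rres_at_ge_iff[OF assms False, of "rres_at f m"] by simp
    also have "\<dots> \<le> enat n"
      using \<open>m \<le> n\<close> by simp
    finally show ?thesis
      using rres_at_ge_iff[OF assms \<open>n \<noteq> 0\<close>] by simp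
  qed
qed

definition extend_warp :: "(nat \<Rightarrow> enat) \<Rightarrow> enat \<Rightarrow> enat" where
  "extend_warp g x = (case x of enat n \<Rightarrow> g n | \<infinity> \<Rightarrow> (SUP n. g n))"

lemma time_warp_extend_warp:
  assumes "mono g" and "g 0 = 0"
  shows "time_warp (extend_warp g)"
proof -
  have "mono (extend_warp g)"
  proof (rule monoI)
    fix x y :: enat
    assume "x \<le> y"
    then show "extend_warp g x \<le> extend_warp g y"
      using assms(1) by (cases x; cases y) (auto simp: extend_warp_def monoD intro: SUP_upper)
  qed
  then show ?thesis
    using assms(2) by (simp add: time_warp_def extend_warp_def zero_enat_def)
qed

lemma time_warp_le_extend_warp_iff:
  assumes "time_warp h"
  shows "h \<le> extend_warp g \<longleftrightarrow> (\<forall>n. h (enat n) \<le> g n)"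
proof
  assume "h \<le> extend_warp g"
  then have "h (enat n) \<le> extend_warp g (enat n)" for n
    by (rule le_funD)
  then show "\<forall>n. h (enat n) \<le> g n"
    by (simp add: extend_warp_def)
next
  assume "\<forall>n. h (enat n) \<le> g n"
  then show "h \<le> extend_warp g"
    using assms by (auto simp: le_fun_def extend_warp_def time_warp_def intro: SUP_mono' split: enat.split)
qed

lemma lres_eqI:
  assumes "g0 \<in> W" and "\<And>g. g \<in> W \<Longrightarrow> g \<le> g0 \<longleftrightarrow> f \<circ> g \<le> h"
  shows "lres f h = g0"
  unfolding lres_def
proof (rule the_equality)
  show "g0 \<in> W \<and> (\<forall>g\<in>W. g \<le> g0 \<longleftrightarrow> f \<circ> g \<le> h)"
    using assms by blast
next
  fix g1
  assume g1: "g1 \<in> W \<and> (\<forall>g\<in>W. g \<le> g1 \<longleftrightarrow> f \<circ> g \<le> h)"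
  then have "g1 \<le> g0" and "g0 \<le> g1"
    using assms by blast+
  then show "g1 = g0"
    by (rule antisym)
qed

lemma rres_eq_extend_warp:
  assumes "time_warp f"
  shows "rres f = extend_warp (rres_at f)"
  unfolding rres_def
proof (rule lres_eqI)
  show "extend_warp (rres_at f) \<in> W"
    using assms by (simp add: W_def time_warp_extend_warp mono_rres_at rres_at_def)
next
  fix g
  assume "g \<in> W"
  then have g: "time_warp g" and g0: "g (enat 0) = 0"
    by (simp_all add: W_def time_warp_def zero_enat_def)
  have f0: "f 0 = 0"
    using assms by (simp add: time_warp_def)
  have "g (enat n) \<le> rres_at f n \<longleftrightarrow> f (g (enat n)) \<le> enat n" for n
    using rres_at_ge_iff[OF assms] g0 f0 by (cases "n = 0") (simp_all add: rres_at_def zero_enat_def)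
  then have "g \<le> extend_warp (rres_at f) \<longleftrightarrow> (\<forall>n. f (g (enat n)) \<le> enat n)"
    by (simp add: time_warp_le_extend_warp_iff[OF g])
  also have "\<dots> \<longleftrightarrow> (\<forall>x. f (g x) \<le> x)"
  proof (intro iffI allI)
    fix x
    assume "\<forall>n. f (g (enat n)) \<le> enat n"
    then show "f (g x) \<le> x"
      by (cases x) simp_all
  qed simp
  also have "\<dots> \<longleftrightarrow> f \<circ> g \<le> id"
    by (simp add: le_fun_def)
  finally show "g \<le> extend_warp (rres_at f) \<longleftrightarrow> f \<circ> g \<le> id" .
qed

lemma rres_enat_ge_iff:
  assumes "time_warp f" and "n \<noteq> 0"
  shows "y \<le> rres f (enat n) \<longleftrightarrow> f y \<le> enat n"
  using rres_at_ge_iff[OF assms] by (simp add: rres_eq_extend_warp[OF assms(1)] extend_warp_def)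

lemma rres_enat_0:
  assumes "time_warp f"
  shows "rres f (enat 0) = 0"
  by (simp add: rres_eq_extend_warp[OF assms] extend_warp_def rres_at_def)

lemma rres_infinity:
  assumes "time_warp f"
  shows "rres f \<infinity> = (SUP n. rres f (enat n))"
  by (simp add: rres_eq_extend_warp[OF assms] extend_warp_def)

lemma eq_enat_iff_le_not_Suc_le:
  "x = enat m \<longleftrightarrow> enat m \<le> x \<and> \<not> enat (Suc m) \<le> x"
  by (cases x) auto

lemma rres_enat_eq_enat_iff:
  assumes "time_warp f" and "n \<noteq> 0"
  shows "rres f (enat n) = enat m \<longleftrightarrow> f (enat m) \<le> enat n \<and> enat n < f (enat (m + 1))"
  by (simp add: eq_enat_iff_le_not_Suc_le rres_enat_ge_iff[OF assms] not_le)

lemma rres_enat_eq_infinity_iff: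
  assumes "time_warp f" and "n \<noteq> 0"
  shows "rres f (enat n) = \<infinity> \<longleftrightarrow> f \<infinity> \<le> enat n"
  using rres_enat_ge_iff[OF assms, of \<infinity>] by simp

lemma rres_enat_bounded_iff:
  assumes "time_warp f"
  shows "(\<forall>k. rres f (enat k) \<le> enat m) \<longleftrightarrow> f (enat (m + 1)) = \<infinity>"
proof -
  have "rres f (enat k) \<le> enat m \<longleftrightarrow> enat k < f (enat (m + 1))" if "k \<noteq> 0" for k
    using rres_enat_ge_iff[OF assms that, of "enat (Suc m)"] by (simp add: Suc_ile_eq flip: not_le) blast
  then have "(\<forall>k. rres f (enat k) \<le> enat m) \<longleftrightarrow> (\<forall>k. k \<noteq> 0 \<longrightarrow> enat k < f (enat (m + 1)))"
    using rres_enat_0[OF assms] by (metis zero_le)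
  also have "\<dots> \<longleftrightarrow> f (enat (m + 1)) = \<infinity>"
    by (cases "f (enat (m + 1))") (auto dest: spec[of _ "Suc _"])
  finally show ?thesis .
qed

lemma SUP_eq_enat_iff:
  fixes g :: "'a \<Rightarrow> enat"
  shows "(SUP i. g i) = enat m \<longleftrightarrow> (\<forall>i. g i \<le> enat m) \<and> (\<exists>i. g i = enat m)"
proof
  assume sup: "(SUP i. g i) = enat m"
  then have bounded: "\<forall>i. g i \<le> enat m"
    by (metis SUP_upper UNIV_I)
  then have "finite (range g)"
    using finite_enat_bounded by blast
  then have "(SUP i. g i) \<in> range g"
    by (simp add: Sup_enat_def)
  with sup bounded show "(\<forall>i. g i \<le> enat m) \<and> (\<exists>i. g i = enat m)"
    by (metis rangeE)
next
  assume "(\<forall>i. g i \<le> enat m) \<and> (\<exists>i. g i = enat m)"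
  then show "(SUP i. g i) = enat m"
    by (metis SUP_upper2 SUP_least UNIV_I antisym order_refl)
qed

lemma rres_infinity_eq_enat_iff:
  assumes "time_warp f"
  shows "rres f \<infinity> = enat m \<longleftrightarrow> f (enat (m + 1)) = \<infinity> \<and> (\<exists>k. rres f (enat k) = enat m)"
  by (simp add: rres_infinity[OF assms] SUP_eq_enat_iff rres_enat_bounded_iff[OF assms])

lemma rres_infinity_eq_infinity_iff:
  assumes "time_warp f"
  shows "rres f \<infinity> = \<infinity> \<longleftrightarrow> (\<forall>k. f (enat k) < \<infinity>)"
proof -
  have "rres f \<infinity> = \<infinity> \<longleftrightarrow> (\<forall>m. \<not> (SUP k. rres f (enat k)) \<le> enat m)"
    unfolding rres_infinity[OF assms] by (cases "SUP k. rres f (enat k)") auto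
  also have "\<dots> \<longleftrightarrow> (\<forall>m. f (enat (Suc m)) < \<infinity>)"
    by (simp add: SUP_le_iff rres_enat_bounded_iff[OF assms])
  also have "\<dots> \<longleftrightarrow> (\<forall>k. f (enat k) < \<infinity>)"
  proof (intro iffI allI)
    fix k
    assume "\<forall>m. f (enat (Suc m)) < \<infinity>"
    then show "f (enat k) < \<infinity>"
      using assms by (cases k) (simp_all add: time_warp_def zero_enat_def[symmetric])
  qed simp
  finally show ?thesis .
qed

theorem lemma2p6:
  fixes f :: "enat \<Rightarrow> enat" and n m :: nat
  assumes "f \<in> W" and "n \<noteq> 0"
  shows "(rres f (enat n) = enat m \<longleftrightarrow> f (enat m) \<le> enat n \<and> enat n < f (enat (m + 1)))
    \<and> (rres f (enat n) = \<infinity> \<longleftrightarrow> f \<infinity> \<le> enat n)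
    \<and> (rres f \<infinity> = enat m \<longleftrightarrow> f (enat (m + 1)) = \<infinity> \<and> (\<exists>k::nat. rres f (enat k) = enat m))
    \<and> (rres f \<infinity> = \<infinity> \<longleftrightarrow> f \<infinity> < \<infinity> \<or> (f \<infinity> = \<infinity> \<and> (\<forall>k::nat. f (enat k) < \<infinity>)))"
proof -
  have tw: "time_warp f"
    using assms(1) by (simp add: W_def)
  then have "mono f"
    by (simp add: time_warp_def)
  then have "f (enat k) \<le> f \<infinity>" for k
    by (simp add: monoD)
  then have "f \<infinity> < \<infinity> \<or> (f \<infinity> = \<infinity> \<and> (\<forall>k. f (enat k) < \<infinity>)) \<longleftrightarrow> (\<forall>k. f (enat k) < \<infinity>)"
    using le_less_trans enat_ord_simps(4) by blast
  with tw assms(2) show ?thesis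
    by (simp add: rres_enat_eq_enat_iff rres_enat_eq_infinity_iff rres_infinity_eq_enat_iff
        rres_infinity_eq_infinity_iff)
qed

end
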